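(* In any environment $(u_S,u_R)$ satisfying scant-indifferences, for every $\omega\in\Omega$ and all $a_i\ne a_j$ in $A$, $u_S(a_i,\omega)\ne u_S(a_j,\omega)$.
   Context: $A=\{a_1,\dots,a_{|A|}\}$ and $\Omega$ are finite nonempty sets; an environment is a pair of functions $u_S,u_R:A\times\Omega\to[0,1]$. For $a\in A$ let $\mathbf u_S(a)=u_S(a,\cdot)\in\mathbb R^{|\Omega|}$ and $\mathbf u_R(a)=u_R(a,\cdot)$. For each $i$, the expanded-indifference matrix $T^i$ has $|\Omega|$ columns and rows: $\mathbf u_S(a_j)-\mathbf u_S(a_i)$ for each $j\ne i$, then $\mathbf u_R(a_j)-\mathbf u_R(a_i)$ for each $j\ne i$, then the rows of the $|\Omega|\times|\Omega|$ identity matrix. A row-submatrix is obtained by deleting some rows. The environment satisfies scant-indifferences if for each $i$ every row-submatrix of $T^i$ has full rank. *)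

theory Defs
  imports "HOL-Analysis.Analysis"
begin

text \<open>Actions: elements of a finite type 'a (the set A); states: elements of a finite
  type 'w (the set \<Omega>). Both types are nonempty automatically.
  Vectors in R^|\<Omega>| are represented as real^'w.\<close>

definition environment :: "('a::finite \<Rightarrow> 'w::finite \<Rightarrow> real) \<Rightarrow> ('a \<Rightarrow> 'w \<Rightarrow> real) \<Rightarrow> bool" where
  "environment uS uR \<longleftrightarrow> (\<forall>a w. 0 \<le> uS a w \<and> uS a w \<le> 1 \<and> 0 \<le> uR a w \<and> uR a w \<le> 1)"

text \<open>Row labels of the expanded-indifference matrix.\<close>
datatype ('a, 'w) row_label = SRow 'a | RRow 'a | IRow 'w

definition T_rows :: "'a \<Rightarrow> ('a, 'w) row_label set" where
  "T_rows i = {SRow j | j. j \<noteq> i} \<union> {RRow j | j. j \<noteq> i} \<union> range IRow"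

definition T_row :: "('a \<Rightarrow> 'w::finite \<Rightarrow> real) \<Rightarrow> ('a \<Rightarrow> 'w \<Rightarrow> real) \<Rightarrow> 'a
    \<Rightarrow> ('a, 'w) row_label \<Rightarrow> real^'w" where
  "T_row uS uR i r = (case r of
      SRow j \<Rightarrow> (\<chi> w. uS j w - uS i w)
    | RRow j \<Rightarrow> (\<chi> w. uR j w - uR i w)
    | IRow w' \<Rightarrow> (\<chi> w. if w = w' then 1 else 0))"

definition full_rank_rows :: "('r \<Rightarrow> real^'w::finite) \<Rightarrow> 'r set \<Rightarrow> bool" where
  "full_rank_rows rw K \<longleftrightarrow> dim (rw ` K) = min (card K) CARD('w)"

definition scant_indifferences :: "('a::finite \<Rightarrow> 'w::finite \<Rightarrow> real) \<Rightarrow> ('a \<Rightarrow> 'w \<Rightarrow> real) \<Rightarrow> bool" where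
  "scant_indifferences uS uR \<longleftrightarrow>
     (\<forall>i. \<forall>K \<subseteq> T_rows i. full_rank_rows (T_row uS uR i) K)"

end

theory Submission
  imports Defs
begin

text \<open>If two actions gave the sender the same payoff in state \<omega>, the S-row of T^i comparing
  them would vanish in coordinate \<omega>, as do the identity rows e_\<omega>' for \<omega>' \<noteq> \<omega>. These
  |\<Omega>| rows lie in the hyperplane orthogonal to e_\<omega>, so their rank is below |\<Omega>|,
  contradicting full rank of that row-submatrix.\<close>

lemma dim_less_DIM_if_orthogonal:
  fixes a :: "'a::euclidean_space"
  assumes "a \<noteq> 0" and "\<forall>x\<in>S. a \<bullet> x = 0"
  shows "dim S < DIM('a)"
proof -
  have "dim S \<le> dim {x. a \<bullet> x = 0}"
    using assms(2) by (intro dim_subset) blast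
  also have "\<dots> = DIM('a) - 1"
    using assms(1) by (rule dim_hyperplane)
  finally show ?thesis
    using DIM_positive[where 'a='a] by linarith
qed

definition indifference_rows :: "'a \<Rightarrow> 'w \<Rightarrow> ('a, 'w) row_label set" where
  "indifference_rows j w = insert (SRow j) (IRow ` (- {w}))"

lemma card_indifference_rows:
  "card (indifference_rows j w :: ('a, 'w::finite) row_label set) = CARD('w)"
proof -
  have "card (IRow ` (- {w}) :: ('a, 'w) row_label set) = CARD('w) - 1"
    by (simp add: card_image inj_on_def Compl_eq_Diff_UNIV)
  then show ?thesis
    unfolding indifference_rows_def by (auto simp: card_insert_if)
qed

lemma indifference_rows_subset_T_rows:
  "j \<noteq> i \<Longrightarrow> indifference_rows j w \<subseteq> T_rows i"
  unfolding indifference_rows_def T_rows_def by auto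

lemma T_row_indifference_rows_orthogonal:
  assumes "uS i w = uS j w"
  shows "\<forall>x \<in> T_row uS uR i ` indifference_rows j w. axis w 1 \<bullet> x = 0"
  using assms unfolding indifference_rows_def T_row_def by (auto simp: inner_axis')

theorem lemma3:
  fixes uS uR :: "'a::finite \<Rightarrow> 'w::finite \<Rightarrow> real"
  assumes "environment uS uR"
    and "scant_indifferences uS uR"
  shows "\<forall>w. \<forall>ai aj. ai \<noteq> aj \<longrightarrow> uS ai w \<noteq> uS aj w"
proof (intro allI impI notI)
  fix w and ai aj :: 'a
  assume "ai \<noteq> aj" and "uS ai w = uS aj w"
  let ?K = "indifference_rows aj w"
  have "full_rank_rows (T_row uS uR ai) ?K"
    using assms(2) indifference_rows_subset_T_rows[of aj ai w] \<open>ai \<noteq> aj\<close>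
    unfolding scant_indifferences_def by simp
  then have "dim (T_row uS uR ai ` ?K) = CARD('w)"
    by (simp add: full_rank_rows_def card_indifference_rows)
  moreover have "dim (T_row uS uR ai ` ?K) < DIM(real^'w)"
    using T_row_indifference_rows_orthogonal[of uS ai w aj uR] \<open>uS ai w = uS aj w\<close>
    by (intro dim_less_DIM_if_orthogonal[where a="axis w 1"]) simp_all
  ultimately show False
    by simp
qed

end
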